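(* Assume the Bellman setting below and hypotheses (H1), (H3), (H4). Then the Bellman problem $\sup_{P\in\mathcal P}\{-A(P)U+y(P)\}=0$ has at most one solution $U\in\mathbb R^{M+1}$.
   Context: Bellman setting: Let $M\ge 0$ be an integer and $\mathcal P=\mathcal P_0\times\cdots\times\mathcal P_M$ a product of nonempty sets; write $P=(P_0,\dots,P_M)\in\mathcal P$. Let $A:\mathcal P\to\mathbb R^{(M+1)\times(M+1)}$ and $y:\mathcal P\to\mathbb R^{M+1}$ be row-decoupled: for each $i$, the $i$-th row of $A(P)$ and the $i$-th entry of $y(P)$ depend only on $P_i$. Inequalities between vectors are entrywise and suprema of families of vectors are entrywise. The Bellman problem is to find $U$ with $\sup_{P\in\mathcal P}\{-A(P)U+y(P)\}=0$. Row $i$ of a matrix $(a_{ij})$ is strictly diagonally dominant (s.d.d.) if $|a_{ii}|>\sum_{j\ne i}|a_{ij}|$, weakly diagonally dominant (w.d.d.) if $|a_{ii}|\ge\sum_{j\ne i}|a_{ij}|$; a matrix is w.d.d. if all rows are. A Z-matrix is a real matrix with nonpositive off-diagonal entries. (H1): $P\mapsto A(P)^{-1}$ is bounded on $\{P: A(P)\text{ nonsingular}\}$. (H3): for each $P$, $A(P)$ is a w.d.d. Z-matrix with nonnegative diagonal entries, and $[A(P)]_{ii}\le1$ whenever row $i$ of $A(P)$ is not s.d.d. Define $[\hat y(P)]_i=[y(P)]_i$ if row $i$ of $A(P)$ is not s.d.d. and $[\hat y(P)]_i=-\infty$ otherwise, and the operator $\mathbb M$ on vectors with entries in $[-\infty,\infty)$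 by $[\mathbb M X]_i=\sup_{P\in\mathcal P}\{(1-[A(P)]_{ii})X_i-\sum_{j\ne i}[A(P)]_{ij}X_j+[\hat y(P)]_i\}$ (i.e. $\mathbb M=I+\mathbb A$ with $\mathbb AU=\sup_P\{-A(P)U+\hat y(P)\}$), with the conventions $0\cdot(-\infty)=0$ and that any sum containing $-\infty$ equals $-\infty$; $\mathbb M^0=I$, $\mathbb M^k=\mathbb M\circ\mathbb M^{k-1}$. (H4): for each $U\in\mathbb R^{M+1}$ and each $i\in\{0,\dots,M\}$ there exist integers $0\le m_1<m_2$ with $[\mathbb M^{m_1}U]_i>[\mathbb M^{m_2}U]_i$. *)

theory Defs
  imports "HOL-Analysis.Analysis" "HOL-Library.Extended_Real"
begin

text \<open>Indices 0..M are modelled by a finite type 'n; vectors are real^'n,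
 matrices real^'n^'n (row i of A is A $ i). A control P is a function
 'n => 'c with P i in Ps i, i.e. P ranges over Pi UNIV Ps.\<close>

definition sdd_row :: "real^'n^'n \<Rightarrow> 'n \<Rightarrow> bool" where
  "sdd_row A i \<longleftrightarrow> \<bar>A $ i $ i\<bar> > (\<Sum>j\<in>UNIV - {i}. \<bar>A $ i $ j\<bar>)"

definition wdd_row :: "real^'n^'n \<Rightarrow> 'n \<Rightarrow> bool" where
  "wdd_row A i \<longleftrightarrow> \<bar>A $ i $ i\<bar> \<ge> (\<Sum>j\<in>UNIV - {i}. \<bar>A $ i $ j\<bar>)"

definition wdd :: "real^'n^'n \<Rightarrow> bool" where
  "wdd A \<longleftrightarrow> (\<forall>i. wdd_row A i)"

definition Z_matrix :: "real^'n^'n \<Rightarrow> bool" where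
  "Z_matrix A \<longleftrightarrow> (\<forall>i j. i \<noteq> j \<longrightarrow> A $ i $ j \<le> 0)"

definition row_decoupled ::
  "('n \<Rightarrow> 'c set) \<Rightarrow> (('n \<Rightarrow> 'c) \<Rightarrow> real^'n^'n) \<Rightarrow> (('n \<Rightarrow> 'c) \<Rightarrow> real^'n) \<Rightarrow> bool" where
  "row_decoupled Ps A y \<longleftrightarrow>
     (\<forall>P\<in>Pi UNIV Ps. \<forall>Q\<in>Pi UNIV Ps. \<forall>i. P i = Q i \<longrightarrow> A P $ i = A Q $ i \<and> y P $ i = y Q $ i)"

definition bellman_solution ::
  "('n \<Rightarrow> 'c set) \<Rightarrow> (('n \<Rightarrow> 'c) \<Rightarrow> real^'n^'n) \<Rightarrow> (('n \<Rightarrow> 'c) \<Rightarrow> real^'n) \<Rightarrow> real^'n \<Rightarrow> bool" where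
  "bellman_solution Ps A y U \<longleftrightarrow>
     (\<forall>i. (SUP P\<in>Pi UNIV Ps. ereal ((- (A P *v U) + y P) $ i)) = 0)"

definition H1 :: "('n \<Rightarrow> 'c set) \<Rightarrow> (('n \<Rightarrow> 'c) \<Rightarrow> real^'n^'n) \<Rightarrow> bool" where
  "H1 Ps A \<longleftrightarrow> bounded ((\<lambda>P. matrix_inv (A P)) ` {P\<in>Pi UNIV Ps. invertible (A P)})"

definition H3 :: "('n \<Rightarrow> 'c set) \<Rightarrow> (('n \<Rightarrow> 'c) \<Rightarrow> real^'n^'n) \<Rightarrow> bool" where
  "H3 Ps A \<longleftrightarrow> (\<forall>P\<in>Pi UNIV Ps. wdd (A P) \<and> Z_matrix (A P) \<and> (\<forall>i. A P $ i $ i \<ge> 0)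
       \<and> (\<forall>i. \<not> sdd_row (A P) i \<longrightarrow> A P $ i $ i \<le> 1))"

definition yhat :: "(('n \<Rightarrow> 'c) \<Rightarrow> real^'n^'n) \<Rightarrow> (('n \<Rightarrow> 'c) \<Rightarrow> real^'n) \<Rightarrow> ('n \<Rightarrow> 'c) \<Rightarrow> 'n \<Rightarrow> ereal" where
  "yhat A y P i = (if sdd_row (A P) i then -\<infinity> else ereal (y P $ i))"

text \<open>Coefficient of X_j in row i of I - A(P).  Note 0 * (-\<infinity>) = 0 in ereal.\<close>
definition Mcoef :: "(('n \<Rightarrow> 'c) \<Rightarrow> real^'n^'n) \<Rightarrow> ('n \<Rightarrow> 'c) \<Rightarrow> 'n \<Rightarrow> 'n \<Rightarrow> ereal" where
  "Mcoef A P i j = ereal ((if j = i then 1 else 0) - A P $ i $ j)"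

text \<open>The operator M = I + \<A>; a sum containing -\<infinity> is -\<infinity> by convention.\<close>
definition bellman_M ::
  "('n \<Rightarrow> 'c set) \<Rightarrow> (('n \<Rightarrow> 'c) \<Rightarrow> real^'n^'n) \<Rightarrow> (('n \<Rightarrow> 'c) \<Rightarrow> real^'n)
     \<Rightarrow> ('n \<Rightarrow> ereal) \<Rightarrow> ('n \<Rightarrow> ereal)" where
  "bellman_M Ps A y X i =
     (SUP P\<in>Pi UNIV Ps.
        (if yhat A y P i = -\<infinity> \<or> (\<exists>j. Mcoef A P i j * X j = -\<infinity>) then -\<infinity>
         else (\<Sum>j\<in>UNIV. Mcoef A P i j * X j) + yhat A y P i))"

definition H4 :: "('n \<Rightarrow> 'c set) \<Rightarrow> (('n \<Rightarrow> 'c) \<Rightarrow> real^'n^'n) \<Rightarrow> (('n \<Rightarrow> 'c) \<Rightarrow> real^'n) \<Rightarrow> bool" where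
  "H4 Ps A y \<longleftrightarrow> (\<forall>U :: real^'n. \<forall>i. \<exists>m1 m2 :: nat. m1 < m2 \<and>
      ((bellman_M Ps A y ^^ m1) (\<lambda>j. ereal (U $ j))) i > ((bellman_M Ps A y ^^ m2) (\<lambda>j. ereal (U $ j))) i)"

end

theory Submission
  imports Defs
begin

text \<open>Let U and V be solutions and e > 0. By row decoupling, rowwise e-optimal controls
  glue to one control Q with -A(Q)U + y(Q) \<ge> -e, while -A(Q)V + y(Q) \<le> 0, so
  A(Q)(U - V) \<le> e. Call a nonempty set J of non-s.d.d. rows of A(Q) closed if no
  off-diagonal entry of these rows leaves J. Along a closed set the operator M loses at most
  e per step, M^k U \<ge> U - k e, whereas M is monotone and M^k U \<le> U, so (H4) rules out
  closed sets once e is small. Then A(Q) obeys the discrete maximum principle, hence is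
  invertible, and comparing U - V with e A(Q)^-1 1, which is O(e) by (H1), gives U \<le> V
  in the limit e \<to> 0.\<close>

subsection \<open>A maximum principle for weakly chained diagonally dominant Z-matrices\<close>

text \<open>A matrix is weakly chained diagonally dominant iff the empty set is the only
  closed set of non-s.d.d. rows.\<close>
definition nonsdd_closed :: "real^'n^'n \<Rightarrow> 'n set \<Rightarrow> bool" where
  "nonsdd_closed A J \<longleftrightarrow> (\<forall>i\<in>J. \<not> sdd_row A i \<and> (\<forall>j. j \<notin> J \<longrightarrow> A $ i $ j = 0))"

lemma Z_matrix_row_sum:
  fixes A :: "real^'n::finite^'n"
  assumes "Z_matrix A"
  shows "(\<Sum>j\<in>UNIV. A $ i $ j) = A $ i $ i - (\<Sum>j\<in>UNIV - {i}. \<bar>A $ i $ j\<bar>)"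
proof -
  have "(\<Sum>j\<in>UNIV - {i}. A $ i $ j) = (\<Sum>j\<in>UNIV - {i}. - \<bar>A $ i $ j\<bar>)"
    using assms unfolding Z_matrix_def by (intro sum.cong) auto
  then show ?thesis
    by (simp add: sum.remove[of UNIV i] sum_negf)
qed

lemma Z_matrix_row_sum_nonsdd:
  fixes A :: "real^'n::finite^'n"
  assumes "Z_matrix A" "wdd_row A i" "0 \<le> A $ i $ i" "\<not> sdd_row A i"
  shows "(\<Sum>j\<in>UNIV. A $ i $ j) = 0"
  using Z_matrix_row_sum[OF assms(1), of i] assms(2-4) unfolding wdd_row_def sdd_row_def by auto

lemma Z_matrix_row_sum_sdd:
  fixes A :: "real^'n::finite^'n"
  assumes "Z_matrix A" "0 \<le> A $ i $ i" "sdd_row A i"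
  shows "0 < (\<Sum>j\<in>UNIV. A $ i $ j)"
  using Z_matrix_row_sum[OF assms(1), of i] assms(2-3) unfolding sdd_row_def by auto

lemma Z_matrix_mult_pos_at_max:
  fixes A :: "real^'n::finite^'n" and x :: "real^'n"
  assumes Z: "Z_matrix A" and "wdd_row A i" and "0 \<le> A $ i $ i"
    and max: "\<And>j. x $ j \<le> x $ i" and "0 < x $ i"
    and strict: "sdd_row A i \<or> (\<exists>j. x $ j < x $ i \<and> A $ i $ j \<noteq> 0)"
  shows "0 < (A *v x) $ i"
proof -
  have terms_nonneg: "0 \<le> A $ i $ j * (x $ j - x $ i)" for j
    using Z max[of j] unfolding Z_matrix_def by (cases "j = i") (auto intro: mult_nonpos_nonpos)
  then have sum_terms_nonneg: "0 \<le> (\<Sum>j\<in>UNIV. A $ i $ j * (x $ j - x $ i))"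
    by (rule sum_nonneg)
  have "0 \<le> (\<Sum>j\<in>UNIV. A $ i $ j)"
    using Z_matrix_row_sum_sdd[OF Z] Z_matrix_row_sum_nonsdd[OF Z] assms(2,3)
    by (cases "sdd_row A i") (auto intro: less_imp_le)
  then have scaled_row_sum_nonneg: "0 \<le> x $ i * (\<Sum>j\<in>UNIV. A $ i $ j)"
    using \<open>0 < x $ i\<close> by simp
  have split: "(A *v x) $ i = x $ i * (\<Sum>j\<in>UNIV. A $ i $ j) + (\<Sum>j\<in>UNIV. A $ i $ j * (x $ j - x $ i))"
    by (simp add: matrix_vector_mult_def sum_distrib_left sum.distrib[symmetric] algebra_simps)
  consider "sdd_row A i" | j where "x $ j < x $ i" "A $ i $ j \<noteq> 0"
    using strict by blast
  then have "0 < x $ i * (\<Sum>j\<in>UNIV. A $ i $ j) \<or> 0 < (\<Sum>j\<in>UNIV. A $ i $ j * (x $ j - x $ i))"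
  proof cases
    case 1
    then show ?thesis
      using Z_matrix_row_sum_sdd[OF Z] assms(3) \<open>0 < x $ i\<close> by simp
  next
    case (2 j)
    then have "A $ i $ j < 0"
      using Z unfolding Z_matrix_def by (metis less_le not_less_iff_gr_or_eq)
    then have "0 < A $ i $ j * (x $ j - x $ i)"
      using \<open>x $ j < x $ i\<close> by (simp add: mult_neg_neg)
    also have "\<dots> \<le> (\<Sum>j\<in>UNIV. A $ i $ j * (x $ j - x $ i))"
      by (rule member_le_sum) (use terms_nonneg in auto)
    finally show ?thesis ..
  qed
  then show ?thesis
    unfolding split using scaled_row_sum_nonneg sum_terms_nonneg by linarith
qed

lemma wcdd_max_principle:
  fixes A :: "real^'n::finite^'n" and x :: "real^'n"
  assumes wdd: "wdd A" and Z: "Z_matrix A" and diag: "\<forall>i. 0 \<le> A $ i $ i"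
    and wcdd: "\<forall>J. nonsdd_closed A J \<longrightarrow> J = {}"
    and le: "\<forall>i. (A *v x) $ i \<le> 0"
  shows "x $ k \<le> 0"
proof (rule ccontr)
  assume "\<not> x $ k \<le> 0"
  define c where "c = Max (range (\<lambda>i. x $ i))"
  have c_ge: "x $ j \<le> c" for j
    unfolding c_def by (rule Max_ge) auto
  have "0 < c"
    using c_ge[of k] \<open>\<not> x $ k \<le> 0\<close> by linarith
  have "c \<in> range (\<lambda>i. x $ i)"
    unfolding c_def by (rule Max_in) auto
  then have "\<not> nonsdd_closed A {i. x $ i = c}"
    using wcdd by auto
  then obtain i where "x $ i = c" and i: "sdd_row A i \<or> (\<exists>j. x $ j \<noteq> c \<and> A $ i $ j \<noteq> 0)"
    unfolding nonsdd_closed_def by auto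
  have "\<exists>j. x $ j < x $ i \<and> A $ i $ j \<noteq> 0" if "\<exists>j. x $ j \<noteq> c \<and> A $ i $ j \<noteq> 0"
    using that c_ge \<open>x $ i = c\<close> by (metis order.not_eq_order_implies_strict)
  then have "0 < (A *v x) $ i"
    using wdd diag c_ge \<open>0 < c\<close> \<open>x $ i = c\<close> i unfolding wdd_def
    by (intro Z_matrix_mult_pos_at_max[OF Z]) auto
  with le show False
    by (meson not_le)
qed

lemma wcdd_invertible:
  fixes A :: "real^'n::finite^'n"
  assumes "wdd A" "Z_matrix A" "\<forall>i. 0 \<le> A $ i $ i" "\<forall>J. nonsdd_closed A J \<longrightarrow> J = {}"
  shows "invertible A"
proof -
  have "x = 0" if "A *v x = 0" for x
  proof -
    have "x $ j \<le> 0" for j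
      by (rule wcdd_max_principle[OF assms]) (simp add: that)
    moreover have "(- x) $ j \<le> 0" for j
      by (rule wcdd_max_principle[OF assms])
        (use that in \<open>simp add: matrix_vector_mult_def sum_negf vec_eq_iff\<close>)
    ultimately show "x = 0"
      by (simp add: vec_eq_iff order_antisym)
  qed
  then show ?thesis
    unfolding invertible_left_inverse matrix_left_invertible_ker by blast
qed

definition bellman_term ::
  "(('n \<Rightarrow> 'c) \<Rightarrow> real^'n^'n) \<Rightarrow> (('n \<Rightarrow> 'c) \<Rightarrow> real^'n) \<Rightarrow> ('n \<Rightarrow> ereal) \<Rightarrow> ('n \<Rightarrow> 'c) \<Rightarrow> 'n \<Rightarrow> ereal" where
  "bellman_term A y X P i =
     (if yhat A y P i = -\<infinity> \<or> (\<exists>j. Mcoef A P i j * X j = -\<infinity>) then -\<infinity>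
      else (\<Sum>j\<in>UNIV. Mcoef A P i j * X j) + yhat A y P i)"

lemma bellman_M_eq_SUP_bellman_term:
  "bellman_M Ps A y X i = (SUP P\<in>Pi UNIV Ps. bellman_term A y X P i)"
  by (simp add: bellman_M_def bellman_term_def)

lemma bellman_term_real:
  fixes x :: "real^'n::finite"
  assumes "\<not> sdd_row (A P) i"
  shows "bellman_term A y (\<lambda>j. ereal (x $ j)) P i = ereal (x $ i - (A P *v x) $ i + y P $ i)"
proof -
  have "(\<Sum>j\<in>UNIV. ((if j = i then 1 else 0) - A P $ i $ j) * x $ j) = x $ i - (A P *v x) $ i"
    by (simp add: matrix_vector_mult_def left_diff_distrib sum_subtractf
        if_distrib[where f = "\<lambda>a. a * _"] cong: if_cong)
  then show ?thesis
    using assms by (simp add: bellman_term_def yhat_def Mcoef_def)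
qed

lemma bellman_solution_residual_le:
  assumes "bellman_solution Ps A y U" "P \<in> Pi UNIV Ps"
  shows "(- (A P *v U) + y P) $ i \<le> 0"
proof -
  have "ereal ((- (A P *v U) + y P) $ i) \<le> (SUP Q\<in>Pi UNIV Ps. ereal ((- (A Q *v U) + y Q) $ i))"
    using assms(2) by (rule SUP_upper)
  also have "\<dots> = 0"
    using assms(1) unfolding bellman_solution_def by blast
  finally show ?thesis
    by simp
qed

lemma bellman_M_le_solution:
  fixes U :: "real^'n::finite"
  assumes "bellman_solution Ps A y U"
  shows "bellman_M Ps A y (\<lambda>j. ereal (U $ j)) i \<le> ereal (U $ i)"
  unfolding bellman_M_eq_SUP_bellman_term
proof (rule SUP_least)
  fix P assume "P \<in> Pi UNIV Ps"
  then show "bellman_term A y (\<lambda>j. ereal (U $ j)) P i \<le> ereal (U $ i)"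
    using bellman_solution_residual_le[OF assms, of P i]
    by (cases "sdd_row (A P) i") (simp add: bellman_term_def yhat_def, simp add: bellman_term_real)
qed

definition eps_optimal ::
  "('n \<Rightarrow> 'c set) \<Rightarrow> (('n \<Rightarrow> 'c) \<Rightarrow> real^'n^'n) \<Rightarrow> (('n \<Rightarrow> 'c) \<Rightarrow> real^'n) \<Rightarrow> real^'n \<Rightarrow> real
     \<Rightarrow> ('n \<Rightarrow> 'c) \<Rightarrow> bool" where
  "eps_optimal Ps A y U e P \<longleftrightarrow> P \<in> Pi UNIV Ps \<and> (\<forall>i. - e \<le> (- (A P *v U) + y P) $ i)"

context
  fixes Ps :: "'n::finite \<Rightarrow> 'c set"
    and A :: "('n \<Rightarrow> 'c) \<Rightarrow> real^'n^'n"
    and y :: "('n \<Rightarrow> 'c) \<Rightarrow> real^'n"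
  assumes h3: "H3 Ps A"
begin

lemma Mcoef_nonneg:
  assumes "P \<in> Pi UNIV Ps" "\<not> sdd_row (A P) i"
  shows "0 \<le> Mcoef A P i j"
  using h3 assms unfolding H3_def Z_matrix_def Mcoef_def by (cases "j = i") auto

lemma bellman_term_mono:
  assumes P: "P \<in> Pi UNIV Ps" and XY: "\<And>j. X j \<le> Y j"
  shows "bellman_term A y X P i \<le> bellman_term A y Y P i"
proof (cases "yhat A y P i = -\<infinity> \<or> (\<exists>j. Mcoef A P i j * X j = -\<infinity>)")
  case True
  then show ?thesis
    by (simp add: bellman_term_def)
next
  case False
  then have "\<not> sdd_row (A P) i"
    by (auto simp: yhat_def)
  then have mono: "Mcoef A P i j * X j \<le> Mcoef A P i j * Y j" for j
    using Mcoef_nonneg[OF P] XY by (simp add: ereal_mult_left_mono)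
  then have "\<not> (yhat A y P i = -\<infinity> \<or> (\<exists>j. Mcoef A P i j * Y j = -\<infinity>))"
    using False by (metis ereal_infty_less_eq(2))
  moreover have "(\<Sum>j\<in>UNIV. Mcoef A P i j * X j) \<le> (\<Sum>j\<in>UNIV. Mcoef A P i j * Y j)"
    by (rule sum_mono) (rule mono)
  ultimately show ?thesis
    unfolding bellman_term_def if_not_P[OF False] by (subst if_not_P) (auto intro: add_right_mono)
qed

lemma bellman_M_mono:
  assumes "\<And>j. X j \<le> Y j"
  shows "bellman_M Ps A y X i \<le> bellman_M Ps A y Y i"
  unfolding bellman_M_eq_SUP_bellman_term
  by (rule SUP_mono) (use bellman_term_mono assms in blast)

lemma bellman_iterate_le_solution:
  assumes "bellman_solution Ps A y U"
  shows "(bellman_M Ps A y ^^ k) (\<lambda>j. ereal (U $ j)) i \<le> ereal (U $ i)"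
proof (induction k arbitrary: i)
  case 0
  then show ?case by simp
next
  case (Suc k)
  have "(bellman_M Ps A y ^^ Suc k) (\<lambda>j. ereal (U $ j)) i
      \<le> bellman_M Ps A y (\<lambda>j. ereal (U $ j)) i"
    using bellman_M_mono[OF Suc.IH] by simp
  also have "\<dots> \<le> ereal (U $ i)"
    using assms by (rule bellman_M_le_solution)
  finally show ?case .
qed

lemma bellman_iterate_ge_on_nonsdd_closed:
  assumes opt: "eps_optimal Ps A y U e P" and J: "nonsdd_closed (A P) J" and "i \<in> J"
  shows "ereal (U $ i - real k * e) \<le> (bellman_M Ps A y ^^ k) (\<lambda>j. ereal (U $ j)) i"
  using \<open>i \<in> J\<close>
proof (induction k arbitrary: i)
  case 0
  then show ?case by simp
next
  case (Suc k)
  have P: "P \<in> Pi UNIV Ps"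
    using opt by (simp add: eps_optimal_def)
  have nonsdd: "\<not> sdd_row (A P) i" and outside: "\<And>j. j \<notin> J \<Longrightarrow> A P $ i $ j = 0"
    using J Suc.prems by (auto simp: nonsdd_closed_def)
  define X where "X = (bellman_M Ps A y ^^ k) (\<lambda>j. ereal (U $ j))"
  define L where "L = U - (real k * e) *\<^sub>R vec 1"
  define X' where "X' j = (if j \<in> J then X j else ereal (L $ j))" for j
  have "(\<Sum>j\<in>UNIV. A P $ i $ j) = 0"
    using h3 P nonsdd unfolding H3_def wdd_def by (intro Z_matrix_row_sum_nonsdd) auto
  then have L_row: "(A P *v L) $ i = (A P *v U) $ i"
    by (simp add: L_def matrix_vector_mult_def sum_subtractf sum_distrib_left[symmetric] algebra_simps)
  have "ereal (U $ i - real (Suc k) * e) \<le> ereal (L $ i - (A P *v L) $ i + y P $ i)"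
    unfolding L_row using opt by (simp add: eps_optimal_def L_def algebra_simps)
  also have "\<dots> = bellman_term A y (\<lambda>j. ereal (L $ j)) P i"
    using nonsdd by (rule bellman_term_real[symmetric])
  also have "\<dots> \<le> bellman_term A y X' P i"
    by (rule bellman_term_mono[OF P]) (use Suc.IH in \<open>simp add: X'_def X_def L_def\<close>)
  also have "\<dots> = bellman_term A y X P i"
  proof -
    \<comment> \<open>Outside J the coefficients of row i vanish, so X' and X yield the same products.\<close>
    have "Mcoef A P i j * X' j = Mcoef A P i j * X j" for j
      using outside[of j] Suc.prems
      by (cases "j \<in> J") (auto simp: X'_def Mcoef_def zero_ereal_def[symmetric])
    then show ?thesis
      by (simp only: bellman_term_def)
  qed
  also have "\<dots> \<le> (bellman_M Ps A y ^^ Suc k) (\<lambda>j. ereal (U $ j)) i"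
    unfolding X_def funpow.simps comp_def bellman_M_eq_SUP_bellman_term using P by (rule SUP_upper)
  finally show ?case .
qed

end

lemma eventually_eps_optimal_wcdd:
  fixes Ps :: "'n::finite \<Rightarrow> 'c set"
  assumes h3: "H3 Ps A" and h4: "H4 Ps A y" and U: "bellman_solution Ps A y U"
  shows "\<forall>\<^sub>F e in at_right 0. \<forall>P. eps_optimal Ps A y U e P \<longrightarrow> (\<forall>J. nonsdd_closed (A P) J \<longrightarrow> J = {})"
proof -
  let ?u = "\<lambda>j. ereal (U $ j)"
  have "\<forall>\<^sub>F e in at_right 0. \<forall>P J. eps_optimal Ps A y U e P \<longrightarrow> nonsdd_closed (A P) J \<longrightarrow> i \<notin> J"
    for i
  proof -
    obtain m1 m2 :: nat where "m1 < m2"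
      and drop: "(bellman_M Ps A y ^^ m2) ?u i < (bellman_M Ps A y ^^ m1) ?u i"
      using h4 unfolding H4_def by blast
    have "(bellman_M Ps A y ^^ m2) ?u i < ereal (U $ i)"
      using drop bellman_iterate_le_solution[OF h3 U, of m1 i] by (rule order.strict_trans2)
    then obtain r where r: "(bellman_M Ps A y ^^ m2) ?u i < ereal r" "r < U $ i"
      using ereal_dense2 by fastforce
    have "0 < real m2"
      using \<open>m1 < m2\<close> by simp
    show ?thesis
      unfolding eventually_at_right_field
    proof (intro exI[of _ "(U $ i - r) / real m2"] conjI allI impI notI)
      show "0 < (U $ i - r) / real m2"
        using r(2) \<open>0 < real m2\<close> by simp
      fix e P J
      assume "0 < e" "e < (U $ i - r) / real m2" "eps_optimal Ps A y U e P" "nonsdd_closed (A P) J"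
        "i \<in> J"
      then have "ereal (U $ i - real m2 * e) \<le> (bellman_M Ps A y ^^ m2) ?u i"
        by (intro bellman_iterate_ge_on_nonsdd_closed[OF h3])
      moreover have "ereal r < ereal (U $ i - real m2 * e)"
        using \<open>e < (U $ i - r) / real m2\<close> \<open>0 < real m2\<close> by (simp add: field_simps)
      ultimately show False
        using r(1) by (meson less_le_trans less_asym)
    qed
  qed
  then have "\<forall>\<^sub>F e in at_right 0. \<forall>i P J. eps_optimal Ps A y U e P \<longrightarrow> nonsdd_closed (A P) J \<longrightarrow> i \<notin> J"
    by (rule eventually_all_finite)
  then show ?thesis
    by eventually_elim blast
qed

lemma eps_optimal_exists:
  assumes decoupled: "row_decoupled Ps A y" and U: "bellman_solution Ps A y U" and "0 < e"
  shows "\<exists>P. eps_optimal Ps A y U e P"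
proof -
  have "ereal (- e) < (SUP P\<in>Pi UNIV Ps. ereal ((- (A P *v U) + y P) $ i))" for i
    using U \<open>0 < e\<close> unfolding bellman_solution_def by simp
  then have "\<forall>i. \<exists>P. P \<in> Pi UNIV Ps \<and> - e < (- (A P *v U) + y P) $ i"
    unfolding less_SUP_iff by (simp add: Bex_def)
  from choice[OF this] obtain Pf
    where Pf: "\<forall>i. Pf i \<in> Pi UNIV Ps \<and> - e < (- (A (Pf i) *v U) + y (Pf i)) $ i" ..
  \<comment> \<open>Row decoupling lets row i of the glued control be copied from the control Pf i.\<close>
  define Q where "Q i = Pf i i" for i
  have Q: "Q \<in> Pi UNIV Ps"
    using Pf by (auto simp: Q_def Pi_iff)
  have "A Q $ i = A (Pf i) $ i \<and> y Q $ i = y (Pf i) $ i" for i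
    using Pf by (intro decoupled[unfolded row_decoupled_def, rule_format, OF Q]) (simp_all add: Q_def)
  then have "(- (A Q *v U) + y Q) $ i = (- (A (Pf i) *v U) + y (Pf i)) $ i" for i
    by (simp add: matrix_vector_mult_def)
  then have "eps_optimal Ps A y U e Q"
    using Q Pf unfolding eps_optimal_def by (simp add: less_imp_le)
  then show ?thesis
    by blast
qed

lemma matrix_vector_mult_ones_bound:
  fixes M :: "real^'n::finite^'m"
  shows "\<bar>(M *v vec 1) $ i\<bar> \<le> real CARD('n) * norm M"
proof -
  have "\<bar>(M *v vec 1) $ i\<bar> \<le> (\<Sum>j\<in>UNIV. \<bar>M $ i $ j\<bar>)"
    by (simp add: matrix_vector_mult_def)
  also have "\<dots> \<le> (\<Sum>j\<in>(UNIV :: 'n set). norm M)"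
    by (intro sum_mono order.trans[OF component_le_norm_cart Finite_Cartesian_Product.norm_nth_le])
  finally show ?thesis
    by simp
qed

lemma solution_diff_le_eps_optimal:
  assumes h3: "H3 Ps A" and opt: "eps_optimal Ps A y U e Q" and V: "bellman_solution Ps A y V"
    and wcdd: "\<forall>J. nonsdd_closed (A Q) J \<longrightarrow> J = {}"
  shows "invertible (A Q)" and "U $ k - V $ k \<le> e * (matrix_inv (A Q) *v vec 1) $ k"
proof -
  have Q: "Q \<in> Pi UNIV Ps"
    using opt by (simp add: eps_optimal_def)
  have wdd: "wdd (A Q)" and Z: "Z_matrix (A Q)" and diag: "\<forall>i. 0 \<le> A Q $ i $ i"
    using h3 Q unfolding H3_def by auto
  show inv: "invertible (A Q)"
    using wdd Z diag wcdd by (rule wcdd_invertible)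
  define z where "z = matrix_inv (A Q) *v vec 1"
  have "A Q ** matrix_inv (A Q) = mat 1"
    using inv unfolding invertible_def matrix_inv_def by (metis (mono_tags, lifting) someI_ex)
  then have Az: "A Q *v z = vec 1"
    by (simp add: z_def matrix_vector_mul_assoc)
  have residual_le: "(A Q *v (U - V - e *\<^sub>R z)) $ i \<le> 0" for i
  proof -
    have "(A Q *v (U - V - e *\<^sub>R z)) $ i = (A Q *v U) $ i - (A Q *v V) $ i - e * (A Q *v z) $ i"
      by (simp add: matrix_vector_mult_def sum_subtractf sum_distrib_left sum.distrib algebra_simps)
    moreover have "- e \<le> (- (A Q *v U) + y Q) $ i"
      using opt unfolding eps_optimal_def by blast
    ultimately show ?thesis
      using bellman_solution_residual_le[OF V Q, of i] by (simp add: Az)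
  qed
  have "(U - V - e *\<^sub>R z) $ k \<le> 0"
    using residual_le by (intro wcdd_max_principle[OF wdd Z diag wcdd]) blast
  then show "U $ k - V $ k \<le> e * (matrix_inv (A Q) *v vec 1) $ k"
    by (simp add: z_def)
qed

lemma bellman_solution_le:
  fixes Ps :: "'n::finite \<Rightarrow> 'c set"
  assumes decoupled: "row_decoupled Ps A y" and h1: "H1 Ps A" and h3: "H3 Ps A"
    and h4: "H4 Ps A y" and U: "bellman_solution Ps A y U" and V: "bellman_solution Ps A y V"
  shows "U $ k \<le> V $ k"
proof -
  obtain B where B: "\<And>P. P \<in> Pi UNIV Ps \<Longrightarrow> invertible (A P) \<Longrightarrow> norm (matrix_inv (A P)) \<le> B"
    using h1 unfolding H1_def bounded_iff by blast
  define K where "K = real CARD('n) * B"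
  have bound: "\<forall>\<^sub>F e in at_right 0. U $ k - V $ k \<le> e * K"
    using eventually_eps_optimal_wcdd[OF h3 h4 U] eventually_at_right_less[of 0]
  proof eventually_elim
    case (elim e)
    then obtain Q where opt: "eps_optimal Ps A y U e Q"
      using eps_optimal_exists[OF decoupled U] by blast
    have "\<forall>J. nonsdd_closed (A Q) J \<longrightarrow> J = {}"
      using elim(1) opt by blast
    then have inv: "invertible (A Q)" and diff: "U $ k - V $ k \<le> e * (matrix_inv (A Q) *v vec 1) $ k"
      using solution_diff_le_eps_optimal[OF h3 opt V] by blast+
    have "norm (matrix_inv (A Q)) \<le> B"
      using opt inv by (intro B) (simp_all add: eps_optimal_def)
    then have "\<bar>(matrix_inv (A Q) *v vec 1) $ k\<bar> \<le> K"
      using matrix_vector_mult_ones_bound[of "matrix_inv (A Q)" k] unfolding K_def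
      by (meson mult_left_mono of_nat_0_le_iff order.trans)
    then have "e * (matrix_inv (A Q) *v vec 1) $ k \<le> e * K"
      using \<open>0 < e\<close> by (intro mult_left_mono) auto
    then show ?case
      using diff by linarith
  qed
  have "((\<lambda>e. e * K) \<longlongrightarrow> 0) (at_right 0)"
    by (rule tendsto_mult_left_zero[OF tendsto_ident_at])
  then have "U $ k - V $ k \<le> 0"
    using bound trivial_limit_at_right_real by (rule tendsto_lowerbound)
  then show ?thesis
    by simp
qed

theorem theorem3p8:
  fixes Ps :: "'n::finite \<Rightarrow> 'c set"
    and A :: "('n \<Rightarrow> 'c) \<Rightarrow> real^'n^'n"
    and y :: "('n \<Rightarrow> 'c) \<Rightarrow> real^'n"
  assumes nonempty: "\<forall>i. Ps i \<noteq> {}"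
    and decoupled: "row_decoupled Ps A y"
    and h1: "H1 Ps A"
    and h3: "H3 Ps A"
    and h4: "H4 Ps A y"
    and U: "bellman_solution Ps A y U"
    and V: "bellman_solution Ps A y V"
  shows "U = V"
  using bellman_solution_le[OF decoupled h1 h3 h4 U V] bellman_solution_le[OF decoupled h1 h3 h4 V U]
  by (simp add: vec_eq_iff order_antisym)

end
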